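(* Let $K_n$ be the complete graph on $n$ vertices and let $S\subseteq V(K_n)$ with $|S|=s\geq 2$. Then $K_n$ contains $n-\lceil s/2\rceil$ pairwise completely independent $S$-Steiner trees.
   Context: For $S\subseteq V(G)$ with $|S|\ge 2$, an $S$-Steiner tree of $G$ is a subtree $T$ of $G$ with $S\subseteq V(T)$ all of whose leaves belong to $S$. A family of $S$-Steiner trees $T_1,\dots,T_k$ is completely independent if for all $1\le p<q\le k$: $E(T_p)\cap E(T_q)=\emptyset$, $V(T_p)\cap V(T_q)=S$, and for any two vertices $x_1,x_2\in S$ the $(x_1,x_2)$-paths in $T_p$ and in $T_q$ are internally disjoint. *)

theory Defs
  imports Complex_Main
begin

text \<open>Simple graphs: a vertex set V and an edge set E of 2-element subsets of V.
  A subgraph/tree is given by a pair (vertex set, edge set).\<close>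

definition complete_graph_edges :: "'a set \<Rightarrow> 'a set set" where
  "complete_graph_edges V = {{u, v} | u v. u \<in> V \<and> v \<in> V \<and> u \<noteq> v}"

definition is_path :: "'a set set \<Rightarrow> 'a list \<Rightarrow> 'a \<Rightarrow> 'a \<Rightarrow> bool" where
  "is_path E xs u v \<longleftrightarrow> xs \<noteq> [] \<and> hd xs = u \<and> last xs = v \<and> distinct xs \<and>
     (\<forall>i. Suc i < length xs \<longrightarrow> {xs ! i, xs ! Suc i} \<in> E)"

definition internal_vertices :: "'a list \<Rightarrow> 'a set" where
  "internal_vertices xs = set (butlast (tl xs))"

definition is_connected :: "'a set \<Rightarrow> 'a set set \<Rightarrow> bool" where
  "is_connected V E \<longleftrightarrow> (\<forall>u\<in>V. \<forall>v\<in>V. \<exists>xs. is_path E xs u v \<and> set xs \<subseteq> V)"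

definition is_acyclic :: "'a set set \<Rightarrow> bool" where
  "is_acyclic E \<longleftrightarrow> \<not> (\<exists>xs. length xs \<ge> 3 \<and> is_path E xs (hd xs) (last xs) \<and>
                               {last xs, hd xs} \<in> E)"

definition is_subtree :: "'a set \<Rightarrow> 'a set set \<Rightarrow> 'a set \<Rightarrow> 'a set set \<Rightarrow> bool" where
  "is_subtree V E VT ET \<longleftrightarrow> VT \<subseteq> V \<and> ET \<subseteq> E \<and> (\<forall>e\<in>ET. e \<subseteq> VT) \<and>
     VT \<noteq> {} \<and> finite VT \<and> is_connected VT ET \<and> is_acyclic ET"

definition degree :: "'a set set \<Rightarrow> 'a \<Rightarrow> nat" where
  "degree E v = card {e \<in> E. v \<in> e}"

definition leaves :: "'a set \<Rightarrow> 'a set set \<Rightarrow> 'a set" where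
  "leaves VT ET = {v \<in> VT. degree ET v = 1}"

definition steiner_tree :: "'a set \<Rightarrow> 'a set set \<Rightarrow> 'a set \<Rightarrow> 'a set \<times> 'a set set \<Rightarrow> bool" where
  "steiner_tree V E S T \<longleftrightarrow> is_subtree V E (fst T) (snd T) \<and> S \<subseteq> fst T \<and>
     leaves (fst T) (snd T) \<subseteq> S"

definition completely_independent ::
  "'a set \<Rightarrow> 'a set set \<Rightarrow> 'a set \<Rightarrow> nat \<Rightarrow> (nat \<Rightarrow> 'a set \<times> 'a set set) \<Rightarrow> bool" where
  "completely_independent V E S k T \<longleftrightarrow>
     (\<forall>i<k. steiner_tree V E S (T i)) \<and>
     (\<forall>p q. p < q \<and> q < k \<longrightarrow>
        snd (T p) \<inter> snd (T q) = {} \<and>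
        fst (T p) \<inter> fst (T q) = S \<and>
        (\<forall>x1\<in>S. \<forall>x2\<in>S. \<forall>P Q. is_path (snd (T p)) P x1 x2 \<and> set P \<subseteq> fst (T p) \<and>
                               is_path (snd (T q)) Q x1 x2 \<and> set Q \<subseteq> fst (T q) \<longrightarrow>
                               internal_vertices P \<inter> internal_vertices Q = {}))"

end

theory Submission
  imports Defs
begin

text \<open>Call a vertex a hub of an edge set if it has two distinct neighbours. Every internal
  vertex of a path is a hub, so Steiner trees with pairwise disjoint edge sets, pairwise vertex
  intersections \<open>S\<close> and pairwise disjoint sets of hubs are completely independent.
  Write \<open>s = 2m\<close> or \<open>s = 2m + 1\<close> and pair up \<open>2m\<close> vertices of \<open>S\<close> as \<open>u\<^sub>i, v\<^sub>i\<close>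
  (\<open>i < m\<close>). There are \<open>m\<close> edge-disjoint double stars spanning \<open>S\<close>, the \<open>i\<close>-th one with
  centres \<open>u\<^sub>i\<close> and \<open>v\<^sub>i\<close>, hence with all its hubs in \<open>{u\<^sub>i, v\<^sub>i}\<close>. Every vertex \<open>w\<close> outside
  \<open>S\<close> contributes the star joining \<open>w\<close> to \<open>S\<close>, whose only hub is \<open>w\<close>. This gives
  \<open>m + (n - s) = n - \<lceil>s/2\<rceil>\<close> completely independent \<open>S\<close>-Steiner trees.\<close>

definition hubs :: "'a set set \<Rightarrow> 'a set" where
  "hubs E = {v. \<exists>x y. x \<noteq> y \<and> {x, v} \<in> E \<and> {v, y} \<in> E}"

lemma hubsI: "x \<noteq> y \<Longrightarrow> {x, v} \<in> E \<Longrightarrow> {v, y} \<in> E \<Longrightarrow> v \<in> hubs E"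
  unfolding hubs_def by blast

lemma hubs_subset_Union: "hubs E \<subseteq> \<Union>E"
  unfolding hubs_def by blast

lemma is_path_nth_in_hubs:
  assumes "is_path E xs u v" "0 < j" "Suc j < length xs"
  shows "xs ! j \<in> hubs E"
proof -
  have "distinct xs" and step: "\<And>i. Suc i < length xs \<Longrightarrow> {xs ! i, xs ! Suc i} \<in> E"
    using assms(1) unfolding is_path_def by auto
  then have "xs ! (j - 1) \<noteq> xs ! Suc j"
    using assms(2,3) by (simp add: nth_eq_iff_index_eq)
  moreover have "{xs ! (j - 1), xs ! j} \<in> E"
    using step[of "j - 1"] assms(2,3) by simp
  moreover have "{xs ! j, xs ! Suc j} \<in> E"
    using step[of j] assms(3) by simp
  ultimately show ?thesis
    by (rule hubsI)
qed

lemma internal_vertices_subset_hubs: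
  assumes "is_path E xs u v"
  shows "internal_vertices xs \<subseteq> hubs E"
proof
  fix x assume "x \<in> internal_vertices xs"
  then obtain j where "j < length (butlast (tl xs))" "x = butlast (tl xs) ! j"
    unfolding internal_vertices_def by (auto simp: in_set_conv_nth)
  then have "Suc (Suc j) < length xs" "x = xs ! Suc j"
    by (auto simp: nth_butlast nth_tl)
  then show "x \<in> hubs E"
    using is_path_nth_in_hubs[OF assms, of "Suc j"] by simp
qed

lemma completely_independent_if_hubs_disjoint:
  assumes "\<And>i. i < k \<Longrightarrow> steiner_tree V E S (T i)"
    and "\<And>p q. p < q \<Longrightarrow> q < k \<Longrightarrow>
      snd (T p) \<inter> snd (T q) = {} \<and> fst (T p) \<inter> fst (T q) = S \<and>
      hubs (snd (T p)) \<inter> hubs (snd (T q)) = {}"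
  shows "completely_independent V E S k T"
  unfolding completely_independent_def
proof (intro conjI allI impI ballI)
  fix i assume "i < k"
  then show "steiner_tree V E S (T i)"
    by (rule assms(1))
next
  fix p q assume pq: "p < q \<and> q < k"
  then show "snd (T p) \<inter> snd (T q) = {}" "fst (T p) \<inter> fst (T q) = S"
    using assms(2) by simp_all
  fix x1 x2 P Q
  assume "is_path (snd (T p)) P x1 x2 \<and> set P \<subseteq> fst (T p) \<and>
    is_path (snd (T q)) Q x1 x2 \<and> set Q \<subseteq> fst (T q)"
  then have "internal_vertices P \<subseteq> hubs (snd (T p))" "internal_vertices Q \<subseteq> hubs (snd (T q))"
    by (meson internal_vertices_subset_hubs)+
  then show "internal_vertices P \<inter> internal_vertices Q = {}"
    using assms(2) pq by blast
qed

text \<open>The first, second and last vertex of a cycle are three distinct hubs.\<close>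

lemma is_acyclic_if_hubs_subset:
  assumes "hubs E \<subseteq> {a, b}"
  shows "is_acyclic E"
  unfolding is_acyclic_def
proof
  assume "\<exists>xs. 3 \<le> length xs \<and> is_path E xs (hd xs) (last xs) \<and> {last xs, hd xs} \<in> E"
  then obtain xs where len: "3 \<le> length xs" and path: "is_path E xs (hd xs) (last xs)"
    and closing: "{last xs, hd xs} \<in> E"
    by blast
  define l where "l = length xs - 1"
  have "distinct xs" and step: "\<And>i. Suc i < length xs \<Longrightarrow> {xs ! i, xs ! Suc i} \<in> E"
    using path unfolding is_path_def by auto
  then have neq: "xs ! i \<noteq> xs ! j" if "i < length xs" "j < length xs" "i \<noteq> j" for i j
    using that by (simp add: nth_eq_iff_index_eq)
  have neq_ends: "xs ! 0 \<noteq> xs ! 1" "xs ! 0 \<noteq> xs ! l" "xs ! 1 \<noteq> xs ! l" "xs ! (l - 1) \<noteq> xs ! 0"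
    by (rule neq; use len in \<open>auto simp: l_def\<close>)+
  have "xs \<noteq> []"
    using len by auto
  then have closing': "{xs ! l, xs ! 0} \<in> E"
    using closing by (simp add: hd_conv_nth last_conv_nth l_def)
  have "{xs ! 0, xs ! 1} \<in> E"
    using step[of 0] len by simp
  then have "xs ! 0 \<in> hubs E"
    using closing' neq_ends(3) by (intro hubsI[of "xs ! l" "xs ! 1"]) auto
  moreover have "xs ! 1 \<in> hubs E"
    using is_path_nth_in_hubs[OF path, of 1] len by simp
  moreover have "xs ! l \<in> hubs E"
  proof -
    have "{xs ! (l - 1), xs ! l} \<in> E"
      using step[of "l - 1"] len by (simp add: l_def Suc_diff_Suc numeral_eq_Suc)
    then show ?thesis
      by (rule hubsI[OF neq_ends(4) _ closing'])
  qed
  ultimately have "{xs ! 0, xs ! 1, xs ! l} \<subseteq> {a, b}"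
    using assms by blast
  then have "card {xs ! 0, xs ! 1, xs ! l} \<le> card {a, b}"
    by (intro card_mono) simp_all
  also have "\<dots> \<le> 2"
    by (simp add: card_insert_if)
  moreover have "card {xs ! 0, xs ! 1, xs ! l} = 3"
    using neq_ends by simp
  ultimately show False
    by simp
qed

lemma rtrancl_imp_is_path:
  assumes "(u, v) \<in> {(x, y). {x, y} \<in> E}\<^sup>*" "u \<in> V" "\<forall>e\<in>E. e \<subseteq> V"
  shows "\<exists>xs. is_path E xs u v \<and> set xs \<subseteq> V"
  using assms(1)
proof (induction rule: rtrancl_induct)
  case base
  then show ?case
    using assms(2) by (intro exI[of _ "[u]"]) (auto simp: is_path_def)
next
  case (step y z)
  then obtain xs where path: "is_path E xs u y" and xs_V: "set xs \<subseteq> V"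
    by blast
  have ne: "xs \<noteq> []" and last: "last xs = y"
    and step_xs: "\<And>i. Suc i < length xs \<Longrightarrow> {xs ! i, xs ! Suc i} \<in> E"
    using path unfolding is_path_def by auto
  have yz: "{y, z} \<in> E"
    using step by simp
  show ?case
  proof (cases "z \<in> set xs")
    case True
    then obtain k where k: "k < length xs" "xs ! k = z"
      by (auto simp: in_set_conv_nth)
    have "is_path E (take (Suc k) xs) u z"
      using path k unfolding is_path_def by (auto simp: last_conv_nth hd_take)
    moreover have "set (take (Suc k) xs) \<subseteq> V"
      using xs_V set_take_subset by fastforce
    ultimately show ?thesis
      by blast
  next
    case False
    have "is_path E (xs @ [z]) u z"
      unfolding is_path_def
    proof (intro conjI allI impI)
      fix i assume i: "Suc i < length (xs @ [z])"
      show "{(xs @ [z]) ! i, (xs @ [z]) ! Suc i} \<in> E"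
      proof (cases "Suc i < length xs")
        case True
        then show ?thesis
          using step_xs[of i] by (simp add: nth_append)
      next
        case False
        then have "i = length xs - 1"
          using i by simp
        then show ?thesis
          using yz last ne by (simp add: nth_append last_conv_nth)
      qed
    qed (use path False in \<open>auto simp: is_path_def\<close>)
    moreover have "set (xs @ [z]) \<subseteq> V"
      using xs_V yz assms(3) by auto
    ultimately show ?thesis
      by blast
  qed
qed

lemma is_connected_if_reachable_from:
  assumes "r \<in> V" "\<forall>x\<in>V. (r, x) \<in> {(x, y). {x, y} \<in> E}\<^sup>*" "\<forall>e\<in>E. e \<subseteq> V"
  shows "is_connected V E"
  unfolding is_connected_def
proof (intro ballI)
  fix u v assume u: "u \<in> V" and v: "v \<in> V"
  let ?R = "{(x, y). {x, y} \<in> E}"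
  have "?R\<inverse> = ?R"
    by (auto simp: insert_commute)
  then have "(u, r) \<in> ?R\<^sup>*"
    using assms(2) u by (metis rtrancl_converseI)
  moreover have "(r, v) \<in> ?R\<^sup>*"
    using assms(2) v by blast
  ultimately have "(u, v) \<in> ?R\<^sup>*"
    by simp
  then show "\<exists>xs. is_path E xs u v \<and> set xs \<subseteq> V"
    using rtrancl_imp_is_path[OF _ u assms(3)] by simp
qed

lemma doubleton_in_complete_graph_edges:
  "u \<in> V \<Longrightarrow> v \<in> V \<Longrightarrow> u \<noteq> v \<Longrightarrow> {u, v} \<in> complete_graph_edges V"
  unfolding complete_graph_edges_def by blast

lemma complete_graph_edges_mono: "V' \<subseteq> V \<Longrightarrow> complete_graph_edges V' \<subseteq> complete_graph_edges V"
  unfolding complete_graph_edges_def by blast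

lemma steiner_tree_mono:
  "steiner_tree V' E' S T \<Longrightarrow> V' \<subseteq> V \<Longrightarrow> E' \<subseteq> E \<Longrightarrow> steiner_tree V E S T"
  unfolding steiner_tree_def is_subtree_def by blast

definition double_star :: "'a \<Rightarrow> 'a \<Rightarrow> 'a set \<Rightarrow> 'a set \<Rightarrow> 'a set set" where
  "double_star a b A B = insert {a, b} ((\<lambda>x. {a, x}) ` A \<union> (\<lambda>x. {b, x}) ` B)"

lemma edge_at_leaf_of_double_star:
  "v \<notin> {a, b} \<Longrightarrow> {x, v} \<in> double_star a b A B \<longleftrightarrow> x = a \<and> v \<in> A \<or> x = b \<and> v \<in> B"
  unfolding double_star_def by (auto simp: doubleton_eq_iff)

lemma hubs_double_star:
  assumes "A \<inter> B = {}"
  shows "hubs (double_star a b A B) \<subseteq> {a, b}"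
proof (rule ccontr)
  assume "\<not> hubs (double_star a b A B) \<subseteq> {a, b}"
  then obtain v x y where v: "v \<notin> {a, b}" and "x \<noteq> y"
    and "{x, v} \<in> double_star a b A B" "{y, v} \<in> double_star a b A B"
    unfolding hubs_def by (auto simp: insert_commute)
  then have "x = a \<and> v \<in> A \<or> x = b \<and> v \<in> B" "y = a \<and> v \<in> A \<or> y = b \<and> v \<in> B"
    using edge_at_leaf_of_double_star[OF v] by blast+
  with \<open>x \<noteq> y\<close> assms show False
    by blast
qed

lemma double_star_connected:
  "is_connected ({a, b} \<union> A \<union> B) (double_star a b A B)"
proof (rule is_connected_if_reachable_from)
  let ?R = "{(x, y). {x, y} \<in> double_star a b A B}"
  have ab: "(a, b) \<in> ?R"
    by (simp add: double_star_def)
  show "\<forall>x\<in>{a, b} \<union> A \<union> B. (a, x) \<in> ?R\<^sup>*"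
  proof
    fix x assume "x \<in> {a, b} \<union> A \<union> B"
    then consider "x = a" | "x = b" | "x \<in> A" | "x \<in> B"
      by blast
    then show "(a, x) \<in> ?R\<^sup>*"
    proof cases
      case 3
      then have "(a, x) \<in> ?R"
        by (auto simp: double_star_def)
      then show ?thesis
        by blast
    next
      case 4
      then have "(b, x) \<in> ?R"
        by (auto simp: double_star_def)
      then show ?thesis
        using ab by (meson converse_rtrancl_into_rtrancl r_into_rtrancl)
    qed (use ab in auto)
  qed
qed (auto simp: double_star_def)

lemma double_star_is_subtree:
  assumes "a \<noteq> b" "a \<notin> A" "b \<notin> B" "A \<inter> B = {}" "finite (A \<union> B)" "{a, b} \<union> A \<union> B \<subseteq> V"
  shows "is_subtree V (complete_graph_edges V) ({a, b} \<union> A \<union> B) (double_star a b A B)"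
proof -
  have "double_star a b A B \<subseteq> complete_graph_edges V"
    using assms(1-3,6) unfolding double_star_def
    by (blast intro: doubleton_in_complete_graph_edges)
  moreover have "\<forall>e\<in>double_star a b A B. e \<subseteq> {a, b} \<union> A \<union> B"
    unfolding double_star_def by blast
  ultimately show ?thesis
    unfolding is_subtree_def
    using assms(5,6) double_star_connected is_acyclic_if_hubs_subset[OF hubs_double_star[OF assms(4)]]
    by simp
qed

lemma image_double_star:
  "(`) g ` double_star a b A B = double_star (g a) (g b) (g ` A) (g ` B)"
  unfolding double_star_def by (auto simp: image_Un image_image)

definition star :: "'a \<Rightarrow> 'a set \<Rightarrow> 'a set set" where
  "star w S = (\<lambda>x. {w, x}) ` S"

lemma star_eq_double_star: "a \<in> S \<Longrightarrow> star w S = double_star w a (S - {a}) {}"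
  unfolding star_def double_star_def by blast

lemma hubs_star: "hubs (star w S) \<subseteq> {w}"
proof (rule ccontr)
  assume "\<not> hubs (star w S) \<subseteq> {w}"
  then obtain v x y where "v \<noteq> w" "x \<noteq> y" "{x, v} \<in> star w S" "{y, v} \<in> star w S"
    unfolding hubs_def by (auto simp: insert_commute)
  moreover have "u = w" if "v \<noteq> w" "{u, v} \<in> star w S" for u
    using that unfolding star_def by (auto simp: doubleton_eq_iff)
  ultimately show False
    by blast
qed

lemma degree_star: "degree (star w S) w = card S"
proof -
  have "{e \<in> star w S. w \<in> e} = star w S"
    unfolding star_def by blast
  moreover have "inj_on (\<lambda>x. {w, x}) S"
    by (auto simp: inj_on_def doubleton_eq_iff)
  ultimately show ?thesis
    unfolding degree_def star_def by (simp add: card_image)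
qed

lemma star_steiner_tree:
  assumes "S \<subseteq> V" "w \<in> V" "w \<notin> S" "finite S" "2 \<le> card S"
  shows "steiner_tree V (complete_graph_edges V) S (insert w S, star w S)"
proof -
  obtain a where a: "a \<in> S"
    using assms(5) by fastforce
  have "is_subtree V (complete_graph_edges V) ({w, a} \<union> (S - {a}) \<union> {}) (double_star w a (S - {a}) {})"
    by (rule double_star_is_subtree) (use assms a in auto)
  moreover have "{w, a} \<union> (S - {a}) \<union> {} = insert w S"
    using a by auto
  ultimately have "is_subtree V (complete_graph_edges V) (insert w S) (star w S)"
    by (simp add: star_eq_double_star[OF a])
  moreover have "w \<notin> leaves (insert w S) (star w S)"
    using assms(5) by (simp add: leaves_def degree_star)
  ultimately show ?thesis
    unfolding steiner_tree_def leaves_def by auto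
qed

text \<open>Index \<open>i < m\<close> stands for a vertex \<open>u\<^sub>i\<close>, index \<open>m + i\<close> for \<open>v\<^sub>i\<close>, and index \<open>2 * m\<close>,
  present when \<open>s\<close> is odd, for one further vertex. The \<open>i\<close>-th double star joins \<open>u\<^sub>i\<close> to
  \<open>v\<^sub>i\<close>, to \<open>u\<^sub>j\<close> for \<open>j > i\<close>, to \<open>v\<^sub>j\<close> for \<open>j < i\<close> and to the further vertex, and \<open>v\<^sub>i\<close> to
  \<open>v\<^sub>j\<close> for \<open>j > i\<close> and to \<open>u\<^sub>j\<close> for \<open>j < i\<close>.\<close>

definition u_leaves :: "nat \<Rightarrow> nat \<Rightarrow> nat \<Rightarrow> nat set" where
  "u_leaves m s i = {i<..<m} \<union> {m..<m + i} \<union> {2 * m..<s}"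

definition v_leaves :: "nat \<Rightarrow> nat \<Rightarrow> nat set" where
  "v_leaves m i = {m + i<..<2 * m} \<union> {..<i}"

definition paired_double_star :: "nat \<Rightarrow> nat \<Rightarrow> nat \<Rightarrow> nat set set" where
  "paired_double_star m s i = double_star i (m + i) (u_leaves m s i) (v_leaves m i)"

lemma paired_double_star_leaves:
  "i < m \<Longrightarrow> i \<notin> u_leaves m s i \<and> m + i \<notin> v_leaves m i \<and> u_leaves m s i \<inter> v_leaves m i = {}"
  unfolding u_leaves_def v_leaves_def by auto

lemma paired_double_star_vertices:
  "i < m \<Longrightarrow> s div 2 = m \<Longrightarrow> {i, m + i} \<union> u_leaves m s i \<union> v_leaves m i = {0..<s}"
  unfolding u_leaves_def v_leaves_def by auto

lemma paired_double_stars_disjoint: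
  "p < q \<Longrightarrow> q < m \<Longrightarrow> paired_double_star m s p \<inter> paired_double_star m s q = {}"
  unfolding paired_double_star_def double_star_def u_leaves_def v_leaves_def
  by (auto simp: doubleton_eq_iff)

lemma paired_double_star_subset_Pow:
  "i < m \<Longrightarrow> s div 2 = m \<Longrightarrow> paired_double_star m s i \<subseteq> Pow {0..<s}"
  using paired_double_star_vertices[of i m s] unfolding paired_double_star_def double_star_def by blast

lemma image_paired_double_star:
  assumes g: "bij_betw g {0..<s} S" and m: "s div 2 = m" and i: "i < m"
  shows "steiner_tree S (complete_graph_edges S) S (S, (`) g ` paired_double_star m s i)"
    and "hubs ((`) g ` paired_double_star m s i) \<subseteq> {g i, g (m + i)}"
proof -
  let ?A = "g ` u_leaves m s i" and ?B = "g ` v_leaves m i"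
  have star: "(`) g ` paired_double_star m s i = double_star (g i) (g (m + i)) ?A ?B"
    unfolding paired_double_star_def by (rule image_double_star)
  have vertices: "{i, m + i} \<union> u_leaves m s i \<union> v_leaves m i = {0..<s}"
    using paired_double_star_vertices[OF i m] .
  have inj: "inj_on g {0..<s}" and S: "g ` {0..<s} = S"
    using g by (simp_all add: bij_betw_def)
  have S_eq: "{g i, g (m + i)} \<union> ?A \<union> ?B = S"
    using vertices S by (metis image_Un image_empty image_insert)
  have sub: "i \<in> {0..<s}" "m + i \<in> {0..<s}" "u_leaves m s i \<subseteq> {0..<s}" "v_leaves m i \<subseteq> {0..<s}"
    using vertices by blast+
  note leaves = paired_double_star_leaves[OF i, of s]
  have centres: "g i \<noteq> g (m + i)"
    using inj_on_eq_iff[OF inj sub(1,2)] i by simp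
  have disjoint: "?A \<inter> ?B = {}"
    using inj_on_image_Int[OF inj sub(3,4)] leaves by simp
  show "hubs ((`) g ` paired_double_star m s i) \<subseteq> {g i, g (m + i)}"
    using hubs_double_star[OF disjoint] star by simp
  have "is_subtree S (complete_graph_edges S) ({g i, g (m + i)} \<union> ?A \<union> ?B) (double_star (g i) (g (m + i)) ?A ?B)"
  proof (rule double_star_is_subtree[OF centres _ _ disjoint])
    show "g i \<notin> ?A" "g (m + i) \<notin> ?B"
      using inj_on_image_mem_iff[OF inj sub(1,3)] inj_on_image_mem_iff[OF inj sub(2,4)] leaves by simp_all
    show "finite (?A \<union> ?B)"
      using sub by (meson finite_atLeastLessThan finite_Un finite_imageI finite_subset)
    show "{g i, g (m + i)} \<union> ?A \<union> ?B \<subseteq> S"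
      using S_eq by simp
  qed
  then show "steiner_tree S (complete_graph_edges S) S (S, (`) g ` paired_double_star m s i)"
    unfolding steiner_tree_def leaves_def S_eq star by auto
qed

lemma image_paired_double_stars_disjoint:
  assumes g: "bij_betw g {0..<s} S" and m: "s div 2 = m" and pq: "p < q" "q < m"
  shows "(`) g ` paired_double_star m s p \<inter> (`) g ` paired_double_star m s q = {}"
    and "hubs ((`) g ` paired_double_star m s p) \<inter> hubs ((`) g ` paired_double_star m s q) = {}"
proof -
  have inj: "inj_on g {0..<s}"
    using g by (simp add: bij_betw_def)
  then have "inj_on ((`) g) (Pow {0..<s})"
    by (simp add: inj_on_image)
  then show "(`) g ` paired_double_star m s p \<inter> (`) g ` paired_double_star m s q = {}"
    using inj_on_image_Int paired_double_star_subset_Pow[OF _ m] paired_double_stars_disjoint[OF pq] pq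
    by (metis image_empty order.strict_trans)
  have "{g p, g (m + p)} \<inter> {g q, g (m + q)} = {}"
    using pq m inj by (auto simp: inj_on_eq_iff)
  then show "hubs ((`) g ` paired_double_star m s p) \<inter> hubs ((`) g ` paired_double_star m s q) = {}"
    using image_paired_double_star(2)[OF g m, of p] image_paired_double_star(2)[OF g m, of q] pq
    by auto
qed

lemma completely_independent_double_stars_and_stars:
  fixes D :: "nat \<Rightarrow> 'a set set" and w :: "nat \<Rightarrow> 'a"
  assumes S: "S \<subseteq> V" "finite S" "2 \<le> card S"
    and D_tree: "\<And>i. i < m \<Longrightarrow> steiner_tree S (complete_graph_edges S) S (S, D i)"
    and D_disjoint: "\<And>p q. p < q \<Longrightarrow> q < m \<Longrightarrow> D p \<inter> D q = {} \<and> hubs (D p) \<inter> hubs (D q) = {}"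
    and w: "inj_on w {0..<l}" "w ` {0..<l} \<subseteq> V - S"
  shows "completely_independent V (complete_graph_edges V) S (m + l)
    (\<lambda>j. if j < m then (S, D j) else (insert (w (j - m)) S, star (w (j - m)) S))"
    (is "completely_independent _ _ _ _ ?T")
proof -
  have D_edges: "\<forall>e\<in>D i. e \<subseteq> S" if "i < m" for i
    using D_tree[OF that] by (simp add: steiner_tree_def is_subtree_def)
  have D_hubs: "hubs (D i) \<subseteq> S" if "i < m" for i
    using D_edges[OF that] hubs_subset_Union[of "D i"] by (meson Sup_le_iff order_trans)
  have w_out: "w j \<in> V" "w j \<notin> S" if "j < l" for j
    using w(2) that by (auto simp: image_subset_iff)
  have star_edges: "x \<in> e \<and> e \<subseteq> insert x S" if "e \<in> star x S" for x e
    using that by (auto simp: star_def)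
  show ?thesis
  proof (rule completely_independent_if_hubs_disjoint)
    fix i assume "i < m + l"
    then show "steiner_tree V (complete_graph_edges V) S (?T i)"
      using steiner_tree_mono[OF D_tree S(1) complete_graph_edges_mono[OF S(1)]]
        star_steiner_tree[OF S(1) w_out S(2,3)]
      by simp
  next
    fix p q assume pq: "p < q" "q < m + l"
    consider (double_double) "q < m" | (double_star) "p < m" "m \<le> q" | (star_star) "m \<le> p"
      using pq by linarith
    then show "snd (?T p) \<inter> snd (?T q) = {} \<and> fst (?T p) \<inter> fst (?T q) = S \<and>
      hubs (snd (?T p)) \<inter> hubs (snd (?T q)) = {}"
    proof cases
      case double_double
      then show ?thesis
        using D_disjoint pq by simp
    next
      case double_star
      let ?x = "w (q - m)"
      have x: "?x \<notin> S"
        using w_out pq double_star by simp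
      have "D p \<inter> star ?x S = {}"
        using D_edges[OF double_star(1)] star_edges x by blast
      moreover have "hubs (D p) \<inter> hubs (star ?x S) = {}"
        using D_hubs[OF double_star(1)] hubs_star[of ?x S] x by blast
      ultimately show ?thesis
        using double_star by auto
    next
      case star_star
      let ?x = "w (p - m)" and ?y = "w (q - m)"
      have x: "?x \<notin> S" and y: "?y \<notin> S" and xy: "?x \<noteq> ?y"
        using w_out[of "p - m"] w_out[of "q - m"] inj_on_eq_iff[OF w(1), of "p - m" "q - m"] pq star_star
        by auto
      have "star ?x S \<inter> star ?y S = {}"
        using star_edges x xy by blast
      moreover have "hubs (star ?x S) \<inter> hubs (star ?y S) = {}"
        using hubs_star[of ?x S] hubs_star[of ?y S] xy by blast
      ultimately show ?thesis
        using star_star pq x y xy by auto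
    qed
  qed
qed

lemma nat_ceiling_half: "nat \<lceil>real s / 2\<rceil> = s - s div 2"
proof (cases "even s")
  case True
  then show ?thesis
    by (auto elim: evenE)
next
  case False
  then obtain m where s: "s = 2 * m + 1"
    using oddE by blast
  have "\<lceil>real s / 2\<rceil> = int m + 1"
    by (rule ceiling_unique) (simp_all add: s)
  then show ?thesis
    using s by simp
qed

theorem theorem2p6:
  fixes n s :: nat and S :: "nat set"
  assumes "S \<subseteq> {0..<n}" and "card S = s" and "s \<ge> 2"
  shows "\<exists>T. completely_independent {0..<n} (complete_graph_edges {0..<n}) S
               (n - nat \<lceil>real s / 2\<rceil>) T"
proof -
  have "finite S"
    using assms(2,3) card.infinite by force
  then obtain g where g: "bij_betw g {0..<s} S"
    using ex_bij_betw_nat_finite assms(2) by blast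
  have "card ({0..<n} - S) = n - s"
    using assms(1,2) \<open>finite S\<close> by (simp add: card_Diff_subset)
  then obtain w where w: "bij_betw w {0..<n - s} ({0..<n} - S)"
    using ex_bij_betw_nat_finite[of "{0..<n} - S"] by auto
  define m where "m = s div 2"
  then have m: "s div 2 = m"
    by simp
  have "s \<le> n"
    using assms(1,2) by (metis card_atLeastLessThan card_mono diff_zero finite_atLeastLessThan)
  then have "n - nat \<lceil>real s / 2\<rceil> = m + (n - s)"
    by (simp add: nat_ceiling_half m_def)
  moreover have "completely_independent {0..<n} (complete_graph_edges {0..<n}) S (m + (n - s))
    (\<lambda>j. if j < m then (S, (`) g ` paired_double_star m s j)
         else (insert (w (j - m)) S, star (w (j - m)) S))"
  proof (rule completely_independent_double_stars_and_stars)
    show "S \<subseteq> {0..<n}" "finite S" "2 \<le> card S"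
      using assms \<open>finite S\<close> by simp_all
    show "inj_on w {0..<n - s}" "w ` {0..<n - s} \<subseteq> {0..<n} - S"
      using w by (simp_all add: bij_betw_def)
  qed (simp_all add: image_paired_double_star(1)[OF g m] image_paired_double_stars_disjoint[OF g m])
  ultimately show ?thesis
    by auto
qed
end
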